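(* Let $\mathcal{L}$ be the set of formulas of classical propositional calculus (with $\neg$ and $\wedge$ as basic connectives and the other connectives defined classically), and let $a, b \in \mathcal{L}$. The following are equivalent: (1) $a$ logically implies $b$ in classical propositional logic, $a \models b$; (2) for every operation $\mathcal{C}: 2^{\mathcal{L}}\to 2^{\mathcal{L}}$ satisfying Inclusion, Idempotence, Monotonicity, Weak Compactness, $\wedge$-R, $\neg$-R1 and $\neg$-R2, one has $b \in \mathcal{C}(\{a\})$; (3) for every operation $\mathcal{C}: 2^{\mathcal{L}}\to 2^{\mathcal{L}}$ satisfying Inclusion, Cumulativity, Weak Compactness, $\wedge$-R, $\neg$-R1 and $\neg$-R2, one has $b \in \mathcal{C}(\{a\})$; (4) for every operation $\mathcal{C}$ as in (3) and every $A \subseteq \mathcal{L}$, one has $b \in \mathcal{C}(A \cup\{a\})$; (5) for every operation $\mathcal{C}$ as in (3), one has $\mathcal{C}(\{a, \neg b\}) = \mathcal{L}$.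
   Context: Write $\mathcal{C}(A, a_1,\dots,a_k)$ for $\mathcal{C}(A\cup\{a_1,\dots,a_k\})$. Properties, for all $A,B\subseteq\mathcal{L}$, $a,b\in\mathcal{L}$: Inclusion: $A \subseteq \mathcal{C}(A)$. Idempotence: $\mathcal{C}(\mathcal{C}(A)) = \mathcal{C}(A)$. Monotonicity: $A \subseteq B \Rightarrow \mathcal{C}(A)\subseteq\mathcal{C}(B)$. Cumulativity: $A \subseteq B \subseteq \mathcal{C}(A) \Rightarrow \mathcal{C}(A)=\mathcal{C}(B)$. Weak Compactness: if $\mathcal{C}(A)=\mathcal{L}$ then $\mathcal{C}(B)=\mathcal{L}$ for some finite $B\subseteq A$. $\wedge$-R: $\mathcal{C}(A, a\wedge b) = \mathcal{C}(A,a,b)$. $\neg$-R1: $\mathcal{C}(A,a,\neg a)=\mathcal{L}$. $\neg$-R2: if $\mathcal{C}(A,\neg a)=\mathcal{L}$ then $a\in\mathcal{C}(A)$. *)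

theory Defs
  imports Main
begin

datatype form = Atom nat | Neg form | Conj form form

primrec holds :: "(nat \<Rightarrow> bool) \<Rightarrow> form \<Rightarrow> bool" where
  "holds v (Atom p) = v p"
| "holds v (Neg a) = (\<not> holds v a)"
| "holds v (Conj a b) = (holds v a \<and> holds v b)"

definition entails :: "form \<Rightarrow> form \<Rightarrow> bool" (infix "\<Turnstile>" 50) where
  "a \<Turnstile> b \<longleftrightarrow> (\<forall>v. holds v a \<longrightarrow> holds v b)"

definition inclusion :: "(form set \<Rightarrow> form set) \<Rightarrow> bool" where
  "inclusion C \<longleftrightarrow> (\<forall>A. A \<subseteq> C A)"

definition idempotence :: "(form set \<Rightarrow> form set) \<Rightarrow> bool" where
  "idempotence C \<longleftrightarrow> (\<forall>A. C (C A) = C A)"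

definition monotonicity :: "(form set \<Rightarrow> form set) \<Rightarrow> bool" where
  "monotonicity C \<longleftrightarrow> (\<forall>A B. A \<subseteq> B \<longrightarrow> C A \<subseteq> C B)"

definition cumulativity :: "(form set \<Rightarrow> form set) \<Rightarrow> bool" where
  "cumulativity C \<longleftrightarrow> (\<forall>A B. A \<subseteq> B \<and> B \<subseteq> C A \<longrightarrow> C A = C B)"

definition weak_compactness :: "(form set \<Rightarrow> form set) \<Rightarrow> bool" where
  "weak_compactness C \<longleftrightarrow>
     (\<forall>A. C A = UNIV \<longrightarrow> (\<exists>B. finite B \<and> B \<subseteq> A \<and> C B = UNIV))"

definition conj_R :: "(form set \<Rightarrow> form set) \<Rightarrow> bool" where
  "conj_R C \<longleftrightarrow> (\<forall>A a b. C (A \<union> {Conj a b}) = C (A \<union> {a, b}))"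

definition neg_R1 :: "(form set \<Rightarrow> form set) \<Rightarrow> bool" where
  "neg_R1 C \<longleftrightarrow> (\<forall>A a. C (A \<union> {a, Neg a}) = UNIV)"

definition neg_R2 :: "(form set \<Rightarrow> form set) \<Rightarrow> bool" where
  "neg_R2 C \<longleftrightarrow> (\<forall>A a. C (A \<union> {Neg a}) = UNIV \<longrightarrow> a \<in> C A)"

definition monotone_ops :: "(form set \<Rightarrow> form set) set" where
  "monotone_ops = {C. inclusion C \<and> idempotence C \<and> monotonicity C \<and> weak_compactness C
                     \<and> conj_R C \<and> neg_R1 C \<and> neg_R2 C}"

definition cumulative_ops :: "(form set \<Rightarrow> form set) set" where
  "cumulative_ops = {C. inclusion C \<and> cumulativity C \<and> weak_compactness C
                     \<and> conj_R C \<and> neg_R1 C \<and> neg_R2 C}"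

end

theory Submission
  imports Defs
begin

(* Soundness is a tableau argument: an operation with Inclusion, Cumulativity, \<and>-R, \<not>-R1
   and \<not>-R2 sends every set containing a finite unsatisfiable set S to L, by induction on
   the total size of S. Conjunctions are split by \<and>-R. A formula \<not>\<not>x makes \<not>x explosive,
   so \<not>-R2 puts x into the closure and Cumulativity adds it to the premises. For \<not>(x \<and> y),
   the induction hypothesis on the branches \<not>x and x, \<not>y yields x and then y, which
   contradicts \<not>(x \<and> y) by \<not>-R1. Once only literals remain, unsatisfiability means a
   complementary pair, and \<not>-R1 applies.
   Completeness: compact classical consequence Cn has all seven properties, and both
   b \<in> Cn {a} and Cn {a, \<not>b} = L are equivalent to a \<Turnstile> b. *)

definition satisfiable :: "form set \<Rightarrow> bool" where
  "satisfiable S \<longleftrightarrow> (\<exists>v. \<forall>y\<in>S. holds v y)"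

lemma satisfiable_subset: "satisfiable A \<Longrightarrow> B \<subseteq> A \<Longrightarrow> satisfiable B"
  unfolding satisfiable_def by blast

lemma entails_iff_unsatisfiable: "a \<Turnstile> b \<longleftrightarrow> \<not> satisfiable {a, Neg b}"
  unfolding entails_def satisfiable_def by auto

lemma unsatisfiable_replace:
  assumes "\<not> satisfiable S" and "\<And>v. \<forall>t\<in>T. holds v t \<Longrightarrow> holds v z"
  shows "\<not> satisfiable (T \<union> (S - {z}))"
proof
  assume "satisfiable (T \<union> (S - {z}))"
  then obtain v where "\<forall>t\<in>T \<union> (S - {z}). holds v t" unfolding satisfiable_def by blast
  then have "\<forall>t\<in>S. holds v t" using assms(2) by blast
  then show False using assms(1) unfolding satisfiable_def by blast
qed

fun is_literal :: "form \<Rightarrow> bool" where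
  "is_literal (Atom p) = True"
| "is_literal (Neg (Atom p)) = True"
| "is_literal _ = False"

lemma satisfiable_literals:
  assumes "\<forall>z\<in>S. is_literal z" and "\<nexists>p. Atom p \<in> S \<and> Neg (Atom p) \<in> S"
  shows "satisfiable S"
proof -
  have "holds (\<lambda>p. Atom p \<in> S) z" if "z \<in> S" for z
    using assms that by (cases z rule: is_literal.cases) auto
  then show ?thesis unfolding satisfiable_def by blast
qed

lemma form_set_cases:
  obtains (Conj) x y where "Conj x y \<in> S"
  | (Neg_Neg) x where "Neg (Neg x) \<in> S"
  | (Neg_Conj) x y where "Neg (Conj x y) \<in> S"
  | (literals) "\<forall>z\<in>S. is_literal z"
  by (metis is_literal.elims(3))

lemma sum_replace_less:
  fixes f :: "'a \<Rightarrow> nat"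
  assumes "finite S" "z \<in> S" "finite T" "sum f T < f z"
  shows "sum f (T \<union> (S - {z})) < sum f S"
proof -
  have "sum f (T \<union> (S - {z})) \<le> sum f T + sum f (S - {z})"
    using assms(1,3) by (simp add: sum_Un_nat)
  also have "\<dots> < f z + sum f (S - {z})" using assms(4) by simp
  also have "\<dots> = sum f S" using assms(1,2) by (simp add: sum.remove)
  finally show ?thesis .
qed

lemma
  assumes "C \<in> cumulative_ops"
  shows cumulative_ops_subset: "A \<subseteq> C A"
    and cumulative_ops_cong: "A \<subseteq> B \<Longrightarrow> B \<subseteq> C A \<Longrightarrow> C B = C A"
    and cumulative_ops_insert_Conj: "C (insert (Conj a b) A) = C (insert a (insert b A))"
    and cumulative_ops_insert_complementary: "C (insert a (insert (Neg a) A)) = UNIV"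
    and cumulative_ops_mem_if_Neg: "C (insert (Neg a) A) = UNIV \<Longrightarrow> a \<in> C A"
proof -
  have "inclusion C" "cumulativity C" "conj_R C" "neg_R1 C" "neg_R2 C"
    using assms unfolding cumulative_ops_def by simp_all
  then show "A \<subseteq> C A" "A \<subseteq> B \<Longrightarrow> B \<subseteq> C A \<Longrightarrow> C B = C A"
    "C (insert (Conj a b) A) = C (insert a (insert b A))"
    "C (insert a (insert (Neg a) A)) = UNIV"
    "C (insert (Neg a) A) = UNIV \<Longrightarrow> a \<in> C A"
    unfolding inclusion_def cumulativity_def conj_R_def neg_R1_def neg_R2_def by simp_all
qed

lemma cumulative_ops_insert_eq:
  assumes C: "C \<in> cumulative_ops" and "x \<in> C D"
  shows "C (insert x D) = C D"
proof (rule cumulative_ops_cong[OF C])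
  show "insert x D \<subseteq> C D" using assms(2) cumulative_ops_subset[OF C, of D] by blast
qed blast

lemma cumulative_ops_complementary:
  assumes C: "C \<in> cumulative_ops" and "a \<in> D" "Neg a \<in> D"
  shows "C D = UNIV"
  using cumulative_ops_insert_complementary[OF C, of a D] assms(2,3) by (simp add: insert_absorb)

lemma cumulative_ops_Neg_Neg_mem:
  assumes C: "C \<in> cumulative_ops" and "Neg (Neg x) \<in> D"
  shows "C (insert x D) = C D"
proof -
  have "C (insert (Neg x) D) = UNIV"
    using assms(2) by (intro cumulative_ops_complementary[OF C, of "Neg x"]) auto
  then have "x \<in> C D" by (rule cumulative_ops_mem_if_Neg[OF C])
  then show ?thesis by (rule cumulative_ops_insert_eq[OF C])
qed

lemma cumulative_ops_Neg_Conj_mem: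
  assumes C: "C \<in> cumulative_ops" and "Neg (Conj x y) \<in> D"
    and "C (insert (Neg x) D) = UNIV" and "C (insert (Neg y) (insert x D)) = UNIV"
  shows "C D = UNIV"
proof -
  have "C D = C (insert x D)"
    using cumulative_ops_mem_if_Neg[OF C assms(3)] by (simp add: cumulative_ops_insert_eq[OF C])
  also have "\<dots> = C (insert y (insert x D))"
    using cumulative_ops_mem_if_Neg[OF C assms(4)] by (simp add: cumulative_ops_insert_eq[OF C])
  also have "\<dots> = C (insert (Conj x y) (insert x D))"
    unfolding cumulative_ops_insert_Conj[OF C] by (rule arg_cong[where f = C]) blast
  also have "\<dots> = UNIV"
    using assms(2) by (intro cumulative_ops_complementary[OF C, of "Conj x y"]) auto
  finally show ?thesis .
qed

lemma cumulative_ops_eq_UNIV_if_unsatisfiable: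
  assumes C: "C \<in> cumulative_ops"
  shows "finite S \<Longrightarrow> \<not> satisfiable S \<Longrightarrow> S \<subseteq> D \<Longrightarrow> C D = UNIV"
proof (induction "sum size S" arbitrary: S D rule: less_induct)
  case less
  have S: "S \<subseteq> D" by fact
  have IH: "C D' = UNIV"
    if z: "z \<in> S" and T: "finite T" "sum size T < size z" "\<And>v. \<forall>t\<in>T. holds v t \<Longrightarrow> holds v z"
      and "T \<union> (S - {z}) \<subseteq> D'"
    for z T D'
  proof (rule less.hyps)
    show "sum size (T \<union> (S - {z})) < sum size S"
      using sum_replace_less[OF less.prems(1) z T(1,2)] .
    show "finite (T \<union> (S - {z}))" using less.prems(1) T(1) by simp
    show "\<not> satisfiable (T \<union> (S - {z}))"
      using less.prems(2) T(3) by (rule unsatisfiable_replace)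
  qed fact
  show ?case
  proof (cases S rule: form_set_cases)
    case (Conj x y)
    then have "C D = C (insert x (insert y D))"
      using S by (simp add: cumulative_ops_insert_Conj[OF C, symmetric] insert_absorb subsetD)
    also have "\<dots> = UNIV"
      by (rule IH[of "Conj x y" "{x, y}"]) (use Conj S in \<open>auto simp: sum.insert_if\<close>)
    finally show ?thesis .
  next
    case (Neg_Neg x)
    then have "C D = C (insert x D)"
      using S by (simp add: cumulative_ops_Neg_Neg_mem[OF C] subsetD)
    also have "\<dots> = UNIV"
      by (rule IH[of "Neg (Neg x)" "{x}"]) (use Neg_Neg S in auto)
    finally show ?thesis .
  next
    case (Neg_Conj x y)
    show ?thesis
    proof (rule cumulative_ops_Neg_Conj_mem[OF C])
      show "Neg (Conj x y) \<in> D" using Neg_Conj S by blast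
      show "C (insert (Neg x) D) = UNIV"
        by (rule IH[of "Neg (Conj x y)" "{Neg x}"]) (use Neg_Conj S in auto)
      show "C (insert (Neg y) (insert x D)) = UNIV"
        by (rule IH[of "Neg (Conj x y)" "{Neg y}"]) (use Neg_Conj S in auto)
    qed
  next
    case literals
    then obtain p where "Atom p \<in> S" "Neg (Atom p) \<in> S"
      using satisfiable_literals less.prems(2) by blast
    then show ?thesis
      using S by (intro cumulative_ops_complementary[OF C, of "Atom p"]) auto
  qed
qed

lemma entails_imp_cumulative_ops_eq_UNIV:
  assumes "C \<in> cumulative_ops" "a \<Turnstile> b" "{a, Neg b} \<subseteq> D"
  shows "C D = UNIV"
  using assms by (intro cumulative_ops_eq_UNIV_if_unsatisfiable[of C "{a, Neg b}"])
    (simp_all add: entails_iff_unsatisfiable)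

lemma entails_imp_mem_cumulative_ops:
  assumes C: "C \<in> cumulative_ops" and "a \<Turnstile> b"
  shows "b \<in> C (A \<union> {a})"
proof (rule cumulative_ops_mem_if_Neg[OF C])
  show "C (insert (Neg b) (A \<union> {a})) = UNIV"
    by (rule entails_imp_cumulative_ops_eq_UNIV[OF C \<open>a \<Turnstile> b\<close>]) blast
qed

definition Cn :: "form set \<Rightarrow> form set" where
  "Cn A = {x. \<exists>B\<subseteq>A. finite B \<and> (\<forall>v. (\<forall>y\<in>B. holds v y) \<longrightarrow> holds v x)}"

lemma mem_Cn_iff: "x \<in> Cn A \<longleftrightarrow> (\<exists>B\<subseteq>A. finite B \<and> (\<forall>v. (\<forall>y\<in>B. holds v y) \<longrightarrow> holds v x))"
  unfolding Cn_def by (rule mem_Collect_eq)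

lemma CnI: "B \<subseteq> A \<Longrightarrow> finite B \<Longrightarrow> (\<And>v. \<forall>y\<in>B. holds v y \<Longrightarrow> holds v x) \<Longrightarrow> x \<in> Cn A"
  unfolding Cn_def by blast

lemma subset_Cn: "A \<subseteq> Cn A"
proof
  fix x assume "x \<in> A"
  then show "x \<in> Cn A" by (intro CnI[of "{x}"]) simp_all
qed

lemma Cn_mono: "A \<subseteq> B \<Longrightarrow> Cn A \<subseteq> Cn B"
  unfolding mem_Cn_iff subset_iff by blast

lemma finite_subset_Cn_witness:
  assumes "finite B" "B \<subseteq> Cn A"
  shows "\<exists>E\<subseteq>A. finite E \<and> (\<forall>v. (\<forall>z\<in>E. holds v z) \<longrightarrow> (\<forall>y\<in>B. holds v y))"
  using assms
proof (induction B rule: finite_induct)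
  case empty
  show ?case by blast
next
  case (insert y B)
  have "B \<subseteq> Cn A" "y \<in> Cn A" using insert.prems by simp_all
  obtain E where E: "E \<subseteq> A" "finite E" "\<forall>v. (\<forall>z\<in>E. holds v z) \<longrightarrow> (\<forall>y\<in>B. holds v y)"
    using insert.IH[OF \<open>B \<subseteq> Cn A\<close>] by blast
  obtain E' where E': "E' \<subseteq> A" "finite E'" "\<forall>v. (\<forall>z\<in>E'. holds v z) \<longrightarrow> holds v y"
    using \<open>y \<in> Cn A\<close> unfolding mem_Cn_iff by blast
  have "E \<union> E' \<subseteq> A" "finite (E \<union> E')" using E E' by simp_all
  moreover have "\<forall>v. (\<forall>z\<in>E \<union> E'. holds v z) \<longrightarrow> (\<forall>u\<in>insert y B. holds v u)"
    using E(3) E'(3) by simp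
  ultimately show ?case by blast
qed

lemma Cn_subset_Cn:
  assumes "A \<subseteq> Cn A'"
  shows "Cn A \<subseteq> Cn A'"
proof
  fix x assume "x \<in> Cn A"
  then obtain B where B: "B \<subseteq> A" "finite B" "\<forall>v. (\<forall>y\<in>B. holds v y) \<longrightarrow> holds v x"
    unfolding mem_Cn_iff by blast
  have "B \<subseteq> Cn A'" using B(1) assms by (rule order_trans)
  obtain E where E: "E \<subseteq> A'" "finite E" "\<forall>v. (\<forall>z\<in>E. holds v z) \<longrightarrow> (\<forall>y\<in>B. holds v y)"
    using finite_subset_Cn_witness[OF B(2) \<open>B \<subseteq> Cn A'\<close>] by blast
  show "x \<in> Cn A'"
    by (rule CnI[OF E(1,2)]) (use E(3) B(3) in blast)
qed

lemma Cn_idem: "Cn (Cn A) = Cn A"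
  by (intro subset_antisym Cn_subset_Cn subset_refl subset_Cn)

lemma Cn_eq_UNIV_iff: "Cn A = UNIV \<longleftrightarrow> (\<exists>B\<subseteq>A. finite B \<and> \<not> satisfiable B)"
proof
  assume "Cn A = UNIV"
  then have "Conj (Atom 0) (Neg (Atom 0)) \<in> Cn A" by simp
  then obtain B where "B \<subseteq> A" "finite B"
    "\<forall>v. (\<forall>y\<in>B. holds v y) \<longrightarrow> holds v (Conj (Atom 0) (Neg (Atom 0)))"
    unfolding mem_Cn_iff by blast
  then show "\<exists>B\<subseteq>A. finite B \<and> \<not> satisfiable B"
    unfolding satisfiable_def by auto
next
  assume "\<exists>B\<subseteq>A. finite B \<and> \<not> satisfiable B"
  then obtain B where B: "B \<subseteq> A" "finite B" "\<not> satisfiable B" by blast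
  have "x \<in> Cn A" for x
    by (rule CnI[OF B(1,2)]) (use B(3) in \<open>auto simp: satisfiable_def\<close>)
  then show "Cn A = UNIV" by blast
qed

lemma Cn_finite_eq_UNIV_iff:
  assumes "finite A"
  shows "Cn A = UNIV \<longleftrightarrow> \<not> satisfiable A"
  unfolding Cn_eq_UNIV_iff using assms satisfiable_subset by blast

lemma mem_Cn_singleton_iff: "b \<in> Cn {a} \<longleftrightarrow> a \<Turnstile> b"
proof
  assume "b \<in> Cn {a}"
  then obtain B where "B \<subseteq> {a}" "\<forall>v. (\<forall>y\<in>B. holds v y) \<longrightarrow> holds v b"
    unfolding mem_Cn_iff by blast
  then show "a \<Turnstile> b" unfolding entails_def by blast
next
  assume "a \<Turnstile> b"
  then show "b \<in> Cn {a}" by (intro CnI[of "{a}"]) (simp_all add: entails_def)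
qed

lemma Cn_Un_Conj: "Cn (A \<union> {Conj a b}) = Cn (A \<union> {a, b})"
proof (intro subset_antisym Cn_subset_Cn)
  have "Conj a b \<in> Cn (A \<union> {a, b})" by (rule CnI[of "{a, b}"]) auto
  then show "A \<union> {Conj a b} \<subseteq> Cn (A \<union> {a, b})" using subset_Cn by blast
  have "a \<in> Cn (A \<union> {Conj a b})" "b \<in> Cn (A \<union> {Conj a b})"
    by (rule CnI[of "{Conj a b}"]; simp)+
  then show "A \<union> {a, b} \<subseteq> Cn (A \<union> {Conj a b})" using subset_Cn by blast
qed

lemma Cn_complementary: "Cn (A \<union> {a, Neg a}) = UNIV"
  unfolding Cn_eq_UNIV_iff satisfiable_def by (intro exI[of _ "{a, Neg a}"]) simp

lemma mem_Cn_if_Neg: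
  assumes "Cn (A \<union> {Neg a}) = UNIV"
  shows "a \<in> Cn A"
proof -
  obtain B where B: "B \<subseteq> A \<union> {Neg a}" "finite B" "\<not> satisfiable B"
    using assms unfolding Cn_eq_UNIV_iff by blast
  show ?thesis
  proof (rule CnI[of "B - {Neg a}"])
    show "B - {Neg a} \<subseteq> A" "finite (B - {Neg a})" using B(1,2) by auto
    show "holds v a" if "\<forall>y\<in>B - {Neg a}. holds v y" for v
    proof (rule ccontr)
      assume "\<not> holds v a"
      then have "\<forall>y\<in>B. holds v y" using that by auto
      then show False using B(3) unfolding satisfiable_def by blast
    qed
  qed
qed

lemma Cn_in_monotone_ops: "Cn \<in> monotone_ops"
  unfolding monotone_ops_def
proof (intro CollectI conjI)
  show "inclusion Cn" unfolding inclusion_def using subset_Cn by blast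
  show "idempotence Cn" unfolding idempotence_def using Cn_idem by blast
  show "monotonicity Cn" unfolding monotonicity_def using Cn_mono by blast
  show "weak_compactness Cn" unfolding weak_compactness_def Cn_eq_UNIV_iff by blast
  show "conj_R Cn" unfolding conj_R_def using Cn_Un_Conj by blast
  show "neg_R1 Cn" unfolding neg_R1_def using Cn_complementary by blast
  show "neg_R2 Cn" unfolding neg_R2_def using mem_Cn_if_Neg by blast
qed

lemma monotone_ops_subset_cumulative_ops: "monotone_ops \<subseteq> cumulative_ops"
proof
  fix C assume C: "C \<in> monotone_ops"
  have "C A = C B" if "A \<subseteq> B" "B \<subseteq> C A" for A B
  proof (rule subset_antisym)
    show "C A \<subseteq> C B" using C \<open>A \<subseteq> B\<close> unfolding monotone_ops_def monotonicity_def by blast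
    have "C B \<subseteq> C (C A)" using C \<open>B \<subseteq> C A\<close> unfolding monotone_ops_def monotonicity_def by blast
    then show "C B \<subseteq> C A" using C unfolding monotone_ops_def idempotence_def by simp
  qed
  then show "C \<in> cumulative_ops"
    using C unfolding monotone_ops_def cumulative_ops_def cumulativity_def by blast
qed

theorem theorem5:
  fixes a b :: form
  shows "(a \<Turnstile> b \<longleftrightarrow> (\<forall>C\<in>monotone_ops. b \<in> C {a}))
       \<and> (a \<Turnstile> b \<longleftrightarrow> (\<forall>C\<in>cumulative_ops. b \<in> C {a}))
       \<and> (a \<Turnstile> b \<longleftrightarrow> (\<forall>C\<in>cumulative_ops. \<forall>A. b \<in> C (A \<union> {a})))
       \<and> (a \<Turnstile> b \<longleftrightarrow> (\<forall>C\<in>cumulative_ops. C {a, Neg b} = UNIV))"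
proof -
  have Cn_cumulative: "Cn \<in> cumulative_ops"
    using Cn_in_monotone_ops monotone_ops_subset_cumulative_ops by blast
  have "a \<Turnstile> b \<Longrightarrow> \<forall>C\<in>cumulative_ops. \<forall>A. b \<in> C (A \<union> {a})"
    using entails_imp_mem_cumulative_ops by blast
  moreover have "(\<forall>C\<in>cumulative_ops. \<forall>A. b \<in> C (A \<union> {a})) \<Longrightarrow> \<forall>C\<in>cumulative_ops. b \<in> C {a}"
    by (metis Un_empty_left)
  moreover have "(\<forall>C\<in>cumulative_ops. b \<in> C {a}) \<Longrightarrow> \<forall>C\<in>monotone_ops. b \<in> C {a}"
    using monotone_ops_subset_cumulative_ops by blast
  moreover have "(\<forall>C\<in>monotone_ops. b \<in> C {a}) \<Longrightarrow> a \<Turnstile> b"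
    using Cn_in_monotone_ops mem_Cn_singleton_iff by blast
  moreover have "a \<Turnstile> b \<Longrightarrow> \<forall>C\<in>cumulative_ops. C {a, Neg b} = UNIV"
    using entails_imp_cumulative_ops_eq_UNIV by blast
  moreover have "(\<forall>C\<in>cumulative_ops. C {a, Neg b} = UNIV) \<Longrightarrow> a \<Turnstile> b"
    using Cn_cumulative Cn_finite_eq_UNIV_iff[of "{a, Neg b}"] entails_iff_unsatisfiable by simp
  ultimately show ?thesis by argo
qed

end
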